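(* Let $\{\alpha_k^i\}$ and $\{\tilde\alpha_k^i\}$, $i=1,\dots,n$, be the sequences produced by Algorithm DFL (defined in the context) with fixed $\epsilon>0$. Then $\lim_{k\to\infty}\alpha_k^i=0$ and $\lim_{k\to\infty}\tilde\alpha_k^i=0$ for every $i=1,\dots,n$.
   Context: Problem data: $f:\mathbb{R}^n\to\mathbb{R}$, $g:\mathbb{R}^n\to\mathbb{R}^m$, $h:\mathbb{R}^n\to\mathbb{R}^q$ continuously differentiable; $l,u\in\mathbb{R}^n$ with $l<u$; $X=\{x: l\le x\le u\}$; $S_<=\{x: g(x)<0\}$; there is $x_0\in X\cap S_<$. Fix $\nu>1$. For $\epsilon>0$, $P(x;\epsilon)=f(x)-\epsilon\sum_{j=1}^m\log(-g_j(x))+\frac1\epsilon\sum_{j=1}^q|h_j(x)|^\nu$ if $x\in S_<$, and $P(x;\epsilon)=+\infty$ otherwise. $e^i$ is the $i$-th unit coordinate vector. Expansion Step$(\hat\alpha,y,p,\gamma)$ with parameter $\delta\in(0,1)$ (using the current $\epsilon$): let $b$ be the largest $\beta\ge0$ with $y+\beta p\in X$; set $\alpha\leftarrow\hat\alpha$; repeat: $\check\alpha\leftarrow\min\{b,\alpha/\delta\}$; if $y+\check\alpha p\notin S_<$ return $\alpha$; else if $P(y+\check\alpha p;\epsilon)\le P(y;\epsilon)-\gamma\check\alpha^2$ set $\alpha\leftarrow\check\alpha$ and return if $\check\alpha=b$, else repeat; otherwise return $\alpha$. Algorithm DFL (parameters $\epsilon>0,\gamma>0,\theta\in(0,1),\delta\in(0,1)$,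 $\tilde\alpha_0^i>0$, $d_0^i=e^i$): for $k=0,1,\dots$: set $y_k^1=x_k$. For $i=1,\dots,n$: (a) choose $\hat\alpha\in[0,\tilde\alpha_k^i]$ with $y_k^i+\hat\alpha d_k^i\in S_<\cap X$; if $\hat\alpha>0$ and $P(y_k^i+\hat\alpha d_k^i;\epsilon)\le P(y_k^i;\epsilon)-\gamma\hat\alpha^2$, let $\alpha_k^i$ be the output of the Expansion Step$(\hat\alpha,y_k^i,d_k^i,\gamma)$ and set $\tilde\alpha_{k+1}^i=\alpha_k^i$, $d_{k+1}^i=d_k^i$; (b) otherwise do the same with $-d_k^i$ in place of $d_k^i$, and on success set $\tilde\alpha_{k+1}^i=\alpha_k^i$, $d_{k+1}^i=-d_k^i$; (c) if neither succeeds set $\alpha_k^i=0$, $d_{k+1}^i=d_k^i$, $\tilde\alpha_{k+1}^i=\theta\tilde\alpha_k^i$. Then $y_k^{i+1}=y_k^i+\alpha_k^i d_{k+1}^i$. Finally choose any $x_{k+1}\in S_<\cap X$ with $P(x_{k+1};\epsilon)\le P(y_k^{n+1};\epsilon)$. *)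

theory Defs
  imports "HOL-Analysis.Analysis"
begin

definition C1_fun :: "(real^'n \<Rightarrow> real) \<Rightarrow> bool" where
  "C1_fun F \<longleftrightarrow> (\<exists>F'. (\<forall>x. (F has_derivative blinfun_apply (F' x)) (at x))
                     \<and> continuous_on UNIV F')"

definition Sless :: "(nat \<Rightarrow> real^'n \<Rightarrow> real) \<Rightarrow> nat \<Rightarrow> (real^'n) set" where
  "Sless g m = {x. \<forall>j<m. g j x < 0}"

definition pen :: "(real^'n \<Rightarrow> real) \<Rightarrow> (nat \<Rightarrow> real^'n \<Rightarrow> real) \<Rightarrow> nat
    \<Rightarrow> (nat \<Rightarrow> real^'n \<Rightarrow> real) \<Rightarrow> nat \<Rightarrow> real \<Rightarrow> real \<Rightarrow> real^'n \<Rightarrow> ereal" where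
  "pen f g m h q nu eps x =
     (if x \<in> Sless g m
      then ereal (f x - eps * (\<Sum>j<m. ln (- g j x)) + (1 / eps) * (\<Sum>j<q. \<bar>h j x\<bar> powr nu))
      else \<infinity>)"

definition bmax :: "(real^'n) set \<Rightarrow> real^'n \<Rightarrow> real^'n \<Rightarrow> real" where
  "bmax X y p = Sup {\<beta>. 0 \<le> \<beta> \<and> y + \<beta> *\<^sub>R p \<in> X}"

text \<open>Expansion Step: expand Pf S X gam del y p a r means that the loop of the
  Expansion Step, when its current value of alpha is a, terminates returning r.
  Starting it with a = alpha-hat gives the output of Expansion Step(alpha-hat,y,p,gamma).\<close>
inductive expand :: "(real^'n \<Rightarrow> ereal) \<Rightarrow> (real^'n) set \<Rightarrow> (real^'n) set \<Rightarrow> real \<Rightarrow> real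
    \<Rightarrow> real^'n \<Rightarrow> real^'n \<Rightarrow> real \<Rightarrow> real \<Rightarrow> bool"
  for Pf S X gam del y p where
  infeas: "y + min (bmax X y p) (a / del) *\<^sub>R p \<notin> S \<Longrightarrow> expand Pf S X gam del y p a a"
| at_bound: "\<lbrakk> ac = min (bmax X y p) (a / del); y + ac *\<^sub>R p \<in> S;
      Pf (y + ac *\<^sub>R p) \<le> Pf y - ereal (gam * ac\<^sup>2); ac = bmax X y p \<rbrakk>
    \<Longrightarrow> expand Pf S X gam del y p a ac"
| continue: "\<lbrakk> ac = min (bmax X y p) (a / del); y + ac *\<^sub>R p \<in> S;
      Pf (y + ac *\<^sub>R p) \<le> Pf y - ereal (gam * ac\<^sup>2); ac \<noteq> bmax X y p;
      expand Pf S X gam del y p ac r \<rbrakk>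
    \<Longrightarrow> expand Pf S X gam del y p a r"
| nodecr: "\<lbrakk> ac = min (bmax X y p) (a / del); y + ac *\<^sub>R p \<in> S;
      \<not> Pf (y + ac *\<^sub>R p) \<le> Pf y - ereal (gam * ac\<^sup>2) \<rbrakk>
    \<Longrightarrow> expand Pf S X gam del y p a a"

definition trial_ok :: "(real^'n) set \<Rightarrow> (real^'n) set \<Rightarrow> real^'n \<Rightarrow> real^'n \<Rightarrow> real \<Rightarrow> real \<Rightarrow> bool" where
  "trial_ok S X y p t a \<longleftrightarrow> 0 \<le> a \<and> a \<le> t \<and> y + a *\<^sub>R p \<in> S \<inter> X"

definition suff_decr :: "(real^'n \<Rightarrow> ereal) \<Rightarrow> real \<Rightarrow> real^'n \<Rightarrow> real^'n \<Rightarrow> real \<Rightarrow> bool" where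
  "suff_decr Pf gam y p a \<longleftrightarrow> a > 0 \<and> Pf (y + a *\<^sub>R p) \<le> Pf y - ereal (gam * a\<^sup>2)"

text \<open>One inner iteration (steps (a),(b),(c)) for coordinate i at outer iteration k:
  current point yi, direction di, tentative step ti; produces alpha_k^i (al'),
  alpha-tilde_{k+1}^i (alt') and d_{k+1}^i (d').  The trial step alpha-hat is chosen
  freely (existentially) among admissible ones, separately in (a) and (b).\<close>
definition dfl_inner :: "(real^'n \<Rightarrow> ereal) \<Rightarrow> (real^'n) set \<Rightarrow> (real^'n) set \<Rightarrow> real \<Rightarrow> real \<Rightarrow> real
    \<Rightarrow> real^'n \<Rightarrow> real^'n \<Rightarrow> real \<Rightarrow> real \<Rightarrow> real \<Rightarrow> real^'n \<Rightarrow> bool" where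
  "dfl_inner Pf S X gam theta del yi di ti al' alt' d' \<longleftrightarrow>
     (\<exists>a. trial_ok S X yi di ti a \<and> suff_decr Pf gam yi di a
          \<and> expand Pf S X gam del yi di a al' \<and> alt' = al' \<and> d' = di)
   \<or> ((\<exists>a. trial_ok S X yi di ti a \<and> \<not> suff_decr Pf gam yi di a) \<and>
       ((\<exists>a. trial_ok S X yi (- di) ti a \<and> suff_decr Pf gam yi (- di) a
             \<and> expand Pf S X gam del yi (- di) a al' \<and> alt' = al' \<and> d' = - di)
        \<or> ((\<exists>a. trial_ok S X yi (- di) ti a \<and> \<not> suff_decr Pf gam yi (- di) a)
             \<and> al' = 0 \<and> d' = di \<and> alt' = theta * ti)))"

text \<open>Coordinates are visited in the order given by the
  enumeration e of the index type ('paper index i' = e (i-1)); inner indices are 0..n-1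
  and y k n is y_k^{n+1} of the paper.\<close>
definition dfl_run :: "(real^'n \<Rightarrow> real) \<Rightarrow> (nat \<Rightarrow> real^'n \<Rightarrow> real) \<Rightarrow> nat
    \<Rightarrow> (nat \<Rightarrow> real^'n \<Rightarrow> real) \<Rightarrow> nat \<Rightarrow> real^'n \<Rightarrow> real^'n \<Rightarrow> real
    \<Rightarrow> real \<Rightarrow> real \<Rightarrow> real \<Rightarrow> real \<Rightarrow> (nat \<Rightarrow> 'n)
    \<Rightarrow> (nat \<Rightarrow> real^'n) \<Rightarrow> (nat \<Rightarrow> nat \<Rightarrow> real^'n) \<Rightarrow> (nat \<Rightarrow> nat \<Rightarrow> real)
    \<Rightarrow> (nat \<Rightarrow> nat \<Rightarrow> real) \<Rightarrow> (nat \<Rightarrow> nat \<Rightarrow> real^'n) \<Rightarrow> bool" where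
  "dfl_run f g m h q l u nu eps gam theta del e x y al alt d \<longleftrightarrow>
     (let S = Sless g m; X = cbox l u; Pf = pen f g m h q nu eps; n = CARD('n) in
       x 0 \<in> S \<inter> X
     \<and> (\<forall>i<n. alt 0 i > 0 \<and> d 0 i = axis (e i) 1)
     \<and> (\<forall>k. y k 0 = x k)
     \<and> (\<forall>k. \<forall>i<n. dfl_inner Pf S X gam theta del (y k i) (d k i) (alt k i)
                      (al k i) (alt (Suc k) i) (d (Suc k) i)
                 \<and> y k (Suc i) = y k i + al k i *\<^sub>R d (Suc k) i)
     \<and> (\<forall>k. x (Suc k) \<in> S \<inter> X \<and> Pf (x (Suc k)) \<le> Pf (y k n)))"

end

theory Submission
  imports Defs
begin

text \<open>On the strictly feasible set the penalty-barrier function is finite and each accepted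
  step of the algorithm decreases it by at least \<open>\<gamma> \<alpha>\<^sup>2\<close>. Since it is bounded below on the
  compact box (the barrier term \<open>-\<epsilon> \<Sum> ln (-g\<^sub>j)\<close> is bounded below there because \<open>ln t \<le> t - 1\<close>),
  the squared step lengths are summable, so \<open>\<alpha>\<^sub>k\<^sup>i \<rightarrow> 0\<close>. The next tentative step is
  either \<open>\<alpha>\<^sub>k\<^sup>i\<close> or \<open>\<theta>\<close> times the current one, and such a perturbed contraction driven by a
  null sequence tends to zero as well.\<close>

definition pen_real :: "(real^'n \<Rightarrow> real) \<Rightarrow> (nat \<Rightarrow> real^'n \<Rightarrow> real) \<Rightarrow> nat
    \<Rightarrow> (nat \<Rightarrow> real^'n \<Rightarrow> real) \<Rightarrow> nat \<Rightarrow> real \<Rightarrow> real \<Rightarrow> real^'n \<Rightarrow> real" where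
  "pen_real f g m h q nu eps x =
     f x - eps * (\<Sum>j<m. ln (- g j x)) + (1 / eps) * (\<Sum>j<q. \<bar>h j x\<bar> powr nu)"

lemma pen_Sless: "x \<in> Sless g m \<Longrightarrow> pen f g m h q nu eps x = ereal (pen_real f g m h q nu eps x)"
  unfolding pen_def pen_real_def by simp

lemma pen_real_bounded_below:
  fixes X :: "(real^'n) set"
  assumes X: "compact X" and f: "continuous_on X f" and g: "\<forall>j<m. continuous_on X (g j)"
    and eps: "eps > 0"
  shows "\<exists>B. \<forall>z \<in> Sless g m \<inter> X. B \<le> pen_real f g m h q nu eps z"
proof -
  have bounded: "\<exists>M. \<forall>z\<in>X. \<bar>F z\<bar> \<le> M" if "continuous_on X F" for F :: "real^'n \<Rightarrow> real"
    using compact_imp_bounded[OF compact_continuous_image[OF that X]] by (auto simp: bounded_iff)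
  obtain Mf where Mf: "\<forall>z\<in>X. \<bar>f z\<bar> \<le> Mf" using bounded[OF f] by blast
  have "\<forall>j<m. \<exists>M. \<forall>z\<in>X. \<bar>g j z\<bar> \<le> M" using bounded g by blast
  then obtain Mg where Mg: "\<forall>j<m. \<forall>z\<in>X. \<bar>g j z\<bar> \<le> Mg j" by metis
  have "- Mf - eps * (\<Sum>j<m. Mg j) \<le> pen_real f g m h q nu eps z" if z: "z \<in> Sless g m \<inter> X" for z
  proof -
    have "ln (- g j z) \<le> Mg j" if "j < m" for j
    proof -
      have "g j z < 0" "\<bar>g j z\<bar> \<le> Mg j" using z Mg that unfolding Sless_def by auto
      moreover have "ln (- g j z) \<le> - g j z - 1" using \<open>g j z < 0\<close> by (intro ln_le_minus_one) simp
      ultimately show ?thesis by simp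
    qed
    then have "eps * (\<Sum>j<m. ln (- g j z)) \<le> eps * (\<Sum>j<m. Mg j)"
      using eps by (intro mult_left_mono sum_mono) auto
    moreover have "0 \<le> (1 / eps) * (\<Sum>j<q. \<bar>h j z\<bar> powr nu)"
      using eps by (intro mult_nonneg_nonneg sum_nonneg) auto
    moreover have "- Mf \<le> f z" using Mf z by fastforce
    ultimately show ?thesis unfolding pen_real_def by linarith
  qed
  then show ?thesis by blast
qed

lemma continuous_on_if_C1_fun: "C1_fun F \<Longrightarrow> continuous_on A F"
  unfolding C1_fun_def by (meson continuous_at_imp_continuous_on has_derivative_continuous)

lemma bmax_cbox_mem:
  fixes l u y p :: "real^'n"
  assumes y: "y \<in> cbox l u" and p: "p \<noteq> 0"
  shows "0 \<le> bmax (cbox l u) y p \<and> y + bmax (cbox l u) y p *\<^sub>R p \<in> cbox l u"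
proof -
  let ?T = "{\<beta>. 0 \<le> \<beta> \<and> y + \<beta> *\<^sub>R p \<in> cbox l u}"
  obtain i where i: "p $ i \<noteq> 0" using p by (metis vec_eq_iff zero_index)
  have "?T = {\<beta>. 0 \<le> \<beta>} \<inter> (\<lambda>\<beta>. y + \<beta> *\<^sub>R p) -` cbox l u" by auto
  moreover have "closed ((\<lambda>\<beta>::real. y + \<beta> *\<^sub>R p) -` cbox l u)"
    by (intro continuous_closed_vimage) (auto intro!: continuous_intros)
  ultimately have closed: "closed ?T" by (simp add: closed_Int closed_Collect_le)
  have "bdd_above ?T"
  proof (rule bdd_aboveI)
    fix b assume "b \<in> ?T"
    then have "0 \<le> b" "l$i \<le> y$i + b * p$i" "y$i + b * p$i \<le> u$i" "l$i \<le> y$i" "y$i \<le> u$i"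
      using y by (auto simp: mem_box_cart)
    then have "b * \<bar>p$i\<bar> \<le> u$i - l$i" by (cases "p$i \<ge> 0") (auto simp: abs_if)
    then show "b \<le> (u$i - l$i) / \<bar>p$i\<bar>" using i by (simp add: field_simps)
  qed
  moreover have "0 \<in> ?T" using y by simp
  ultimately have "Sup ?T \<in> ?T" using closed_contains_Sup[OF _ _ closed] by blast
  then show ?thesis unfolding bmax_def by simp
qed

lemma cbox_segment_bmax:
  fixes l u y p :: "real^'n"
  assumes y: "y \<in> cbox l u" and c: "0 \<le> c" "c \<le> bmax (cbox l u) y p"
  shows "y + c *\<^sub>R p \<in> cbox l u"
proof (cases "p = 0")
  case False
  let ?b = "bmax (cbox l u) y p"
  have "y + ?b *\<^sub>R p \<in> cbox l u" using bmax_cbox_mem[OF y False] by blast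
  moreover have "y + 0 *\<^sub>R p \<in> cbox l u" using y by simp
  moreover have "c \<in> closed_segment 0 ?b" using c by (simp add: closed_segment_eq_real_ivl)
  then have "y + c *\<^sub>R p \<in> closed_segment (y + 0 *\<^sub>R p) (y + ?b *\<^sub>R p)"
    by (auto simp: closed_segment_def algebra_simps)
  ultimately show ?thesis
    using convex_box(1) closed_segment_subset by blast
qed (use y in simp)

text \<open>For \<open>p = 0\<close> the set defining \<open>bmax\<close> is unbounded, so its \<open>Sup\<close> is a junk value of
  unknown sign; hence the disjunction \<open>p = 0 \<or> 0 \<le> a\<close> instead of \<open>0 \<le> a\<close>.\<close>

lemma expansion_trial_in_cbox:
  fixes l u y p :: "real^'n"
  assumes y: "y \<in> cbox l u" and a: "p = 0 \<or> 0 \<le> a" and del: "del > 0"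
  defines "ac \<equiv> min (bmax (cbox l u) y p) (a / del)"
  shows "y + ac *\<^sub>R p \<in> cbox l u \<and> (p = 0 \<or> 0 \<le> ac)"
proof (cases "p = 0")
  case False
  then have "0 \<le> ac" "ac \<le> bmax (cbox l u) y p"
    using bmax_cbox_mem[OF y False] a del by (auto simp: ac_def)
  then show ?thesis using cbox_segment_bmax[OF y] by blast
qed (use y in simp)

lemma expand_sufficient_decrease:
  fixes l u y p :: "real^'n"
  assumes "expand Pf S (cbox l u) gam del y p a r" "y \<in> cbox l u" "del > 0"
    "y + a *\<^sub>R p \<in> S \<inter> cbox l u" "Pf (y + a *\<^sub>R p) \<le> Pf y - ereal (gam * a\<^sup>2)"
    "p = 0 \<or> 0 \<le> a"
  shows "y + r *\<^sub>R p \<in> S \<inter> cbox l u \<and> Pf (y + r *\<^sub>R p) \<le> Pf y - ereal (gam * r\<^sup>2)"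
  using assms
proof (induction rule: expand.induct)
  case (at_bound ac a)
  then show ?case using expansion_trial_in_cbox by blast
next
  case (continue ac a r)
  then have "y + ac *\<^sub>R p \<in> S \<inter> cbox l u" "p = 0 \<or> 0 \<le> ac"
    using expansion_trial_in_cbox by blast+
  then show ?case using continue by blast
qed simp_all

lemma dfl_inner_sufficient_decrease:
  fixes l u yi di :: "real^'n"
  assumes "dfl_inner Pf S (cbox l u) gam theta del yi di ti al' alt' d'" "yi \<in> cbox l u" "del > 0"
  shows "al' = 0 \<or>
    yi + al' *\<^sub>R d' \<in> S \<inter> cbox l u \<and> Pf (yi + al' *\<^sub>R d') \<le> Pf yi - ereal (gam * al'\<^sup>2)"
proof -
  have "yi + al' *\<^sub>R p \<in> S \<inter> cbox l u \<and> Pf (yi + al' *\<^sub>R p) \<le> Pf yi - ereal (gam * al'\<^sup>2)"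
    if "trial_ok S (cbox l u) yi p ti a" "suff_decr Pf gam yi p a"
      "expand Pf S (cbox l u) gam del yi p a al'" for p a
    using that expand_sufficient_decrease[OF _ assms(2,3)]
    unfolding trial_ok_def suff_decr_def by blast
  with assms(1) show ?thesis unfolding dfl_inner_def by (elim disjE conjE exE) blast+
qed

lemma dfl_inner_step_update:
  "dfl_inner Pf S X gam theta del yi di ti al' alt' d' \<Longrightarrow> alt' = al' \<or> al' = 0 \<and> alt' = theta * ti"
  unfolding dfl_inner_def by blast

lemma dfl_run_feasible:
  fixes x :: "nat \<Rightarrow> real^'n"
  assumes "dfl_run f g m h q l u nu eps gam theta del e x y al alt d"
  shows "x k \<in> Sless g m \<inter> cbox l u"
  using assms unfolding dfl_run_def Let_def by (cases k) auto

lemma dfl_run_step_update: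
  fixes x :: "nat \<Rightarrow> real^'n"
  assumes "dfl_run f g m h q l u nu eps gam theta del e x y al alt d" "i < CARD('n)"
  shows "alt (Suc k) i = al k i \<or> al k i = 0 \<and> alt (Suc k) i = theta * alt k i"
  using assms dfl_inner_step_update unfolding dfl_run_def Let_def by blast

lemma dfl_run_inner_descent:
  fixes x :: "nat \<Rightarrow> real^'n"
  assumes run: "dfl_run f g m h q l u nu eps gam theta del e x y al alt d"
    and del: "del > 0" and i: "i \<le> CARD('n)"
  shows "y k i \<in> Sless g m \<inter> cbox l u \<and>
    pen_real f g m h q nu eps (y k i) \<le> pen_real f g m h q nu eps (x k) - gam * (\<Sum>j<i. (al k j)\<^sup>2)"
  using i
proof (induction i)
  case 0
  have "y k 0 = x k" using run unfolding dfl_run_def Let_def by auto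
  then show ?case using dfl_run_feasible[OF run] by simp
next
  case (Suc i)
  let ?P = "pen_real f g m h q nu eps"
  have IH: "y k i \<in> Sless g m \<inter> cbox l u" "?P (y k i) \<le> ?P (x k) - gam * (\<Sum>j<i. (al k j)\<^sup>2)"
    using Suc by auto
  have inner: "dfl_inner (pen f g m h q nu eps) (Sless g m) (cbox l u) gam theta del (y k i) (d k i)
      (alt k i) (al k i) (alt (Suc k) i) (d (Suc k) i)"
    and next_point: "y k (Suc i) = y k i + al k i *\<^sub>R d (Suc k) i"
    using run Suc.prems unfolding dfl_run_def Let_def by auto
  from dfl_inner_sufficient_decrease[OF inner _ del] IH(1)
  consider "al k i = 0"
    | "y k (Suc i) \<in> Sless g m \<inter> cbox l u"
      "pen f g m h q nu eps (y k (Suc i)) \<le> pen f g m h q nu eps (y k i) - ereal (gam * (al k i)\<^sup>2)"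
    unfolding next_point by blast
  then show ?case
  proof cases
    case 1
    then show ?thesis using IH next_point by simp
  next
    case 2
    then have "?P (y k (Suc i)) \<le> ?P (y k i) - gam * (al k i)\<^sup>2"
      using IH(1) by (simp add: pen_Sless)
    then show ?thesis using 2 IH(2) by (simp add: algebra_simps)
  qed
qed

lemma dfl_run_outer_descent:
  fixes x :: "nat \<Rightarrow> real^'n"
  assumes run: "dfl_run f g m h q l u nu eps gam theta del e x y al alt d" and del: "del > 0"
  shows "pen_real f g m h q nu eps (x (Suc k))
    \<le> pen_real f g m h q nu eps (x k) - gam * (\<Sum>j<CARD('n). (al k j)\<^sup>2)"
proof -
  let ?n = "CARD('n)"
  have "x (Suc k) \<in> Sless g m"
    "pen f g m h q nu eps (x (Suc k)) \<le> pen f g m h q nu eps (y k ?n)"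
    using run unfolding dfl_run_def Let_def by auto
  moreover note dfl_run_inner_descent[OF run del order_refl, of k]
  ultimately show ?thesis by (auto simp: pen_Sless)
qed

lemma summable_of_descent:
  fixes P s :: "nat \<Rightarrow> real"
  assumes bounded: "\<And>k. B \<le> P k" and descent: "\<And>k. P (Suc k) \<le> P k - c * s k"
    and c: "c > 0" and s: "\<And>k. 0 \<le> s k"
  shows "summable s"
proof (rule summableI_nonneg_bounded)
  fix K
  have "c * (\<Sum>k<K. s k) \<le> P 0 - P K"
  proof (induction K)
    case (Suc K)
    then show ?case using descent[of K] by (simp add: distrib_left)
  qed simp
  then have "c * (\<Sum>k<K. s k) \<le> P 0 - B" using bounded[of K] by linarith
  then show "(\<Sum>k<K. s k) \<le> (P 0 - B) / c" using c by (simp add: field_simps)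
qed (use s in simp)

lemma LIMSEQ_zero_if_summable_power2:
  fixes a :: "nat \<Rightarrow> real"
  assumes "summable (\<lambda>k. (a k)\<^sup>2)"
  shows "a \<longlonglongrightarrow> 0"
proof -
  have "(\<lambda>k. sqrt ((a k)\<^sup>2)) \<longlonglongrightarrow> sqrt 0"
    using tendsto_real_sqrt[OF summable_LIMSEQ_zero[OF assms]] .
  then show ?thesis by (simp add: tendsto_rabs_zero_iff)
qed

text \<open>If \<open>b\<^sub>k \<rightarrow> 0\<close>, then beyond the point where \<open>\<bar>b\<^sub>k\<bar> < (1 - \<theta>) c\<close> the excess \<open>\<bar>a\<^sub>k\<bar> - c\<close>
  is contracted by \<open>\<theta>\<close> at every step.\<close>

lemma LIMSEQ_zero_perturbed_contraction:
  fixes a b :: "nat \<Rightarrow> real"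
  assumes b: "b \<longlonglongrightarrow> 0" and theta: "0 \<le> theta" "theta < 1"
    and step: "\<And>k. \<bar>a (Suc k)\<bar> \<le> \<bar>b k\<bar> + theta * \<bar>a k\<bar>"
  shows "a \<longlonglongrightarrow> 0"
proof (rule LIMSEQ_I)
  fix r :: real assume "0 < r"
  define c where "c = r / 2"
  have c: "0 < c" using \<open>0 < r\<close> by (simp add: c_def)
  then obtain N where N: "\<And>k. k \<ge> N \<Longrightarrow> \<bar>b k\<bar> < (1 - theta) * c"
    using LIMSEQ_D[OF b, of "(1 - theta) * c"] theta by auto
  have excess: "\<bar>a (N + j)\<bar> - c \<le> theta ^ j * \<bar>a N\<bar>" for j
  proof (induction j)
    case (Suc j)
    have "\<bar>a (N + Suc j)\<bar> - c \<le> theta * (\<bar>a (N + j)\<bar> - c)"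
      using step[of "N + j"] N[of "N + j"] by (simp add: algebra_simps)
    also have "\<dots> \<le> theta * (theta ^ j * \<bar>a N\<bar>)"
      using Suc theta by (intro mult_left_mono) auto
    finally show ?case by simp
  qed (use c in simp)
  have "(\<lambda>j. theta ^ j * \<bar>a N\<bar>) \<longlonglongrightarrow> 0"
    using LIMSEQ_power_zero[of theta] theta by (intro tendsto_mult_left_zero) simp
  then obtain M where M: "\<And>j. j \<ge> M \<Longrightarrow> theta ^ j * \<bar>a N\<bar> < c"
    using LIMSEQ_D[OF _ c] by fastforce
  have "\<bar>a k\<bar> < r" if "k \<ge> N + M" for k
  proof -
    have "theta ^ (k - N) * \<bar>a N\<bar> < c" using that by (intro M) simp
    then show ?thesis using excess[of "k - N"] that by (simp add: c_def)
  qed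
  then show "\<exists>no. \<forall>k\<ge>no. norm (a k - 0) < r" by auto
qed

theorem proposition3p2:
  fixes f :: "real^'n \<Rightarrow> real"
    and g h :: "nat \<Rightarrow> real^'n \<Rightarrow> real"
    and m q :: nat
    and l u :: "real^'n"
    and nu eps gam theta del :: real
    and e :: "nat \<Rightarrow> 'n"
    and x :: "nat \<Rightarrow> real^'n"
    and y d :: "nat \<Rightarrow> nat \<Rightarrow> real^'n"
    and al alt :: "nat \<Rightarrow> nat \<Rightarrow> real"
  assumes "C1_fun f" "\<forall>j<m. C1_fun (g j)" "\<forall>j<q. C1_fun (h j)"
    and "\<forall>i. l $ i < u $ i"
    and "\<exists>x0. x0 \<in> cbox l u \<inter> Sless g m"
    and "nu > 1" "eps > 0" "gam > 0" "0 < theta" "theta < 1" "0 < del" "del < 1"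
    and "bij_betw e {..<CARD('n)} UNIV"
    and "dfl_run f g m h q l u nu eps gam theta del e x y al alt d"
  shows "\<forall>i<CARD('n). (\<lambda>k. al k i) \<longlonglongrightarrow> 0 \<and> (\<lambda>k. alt k i) \<longlonglongrightarrow> 0"
proof (intro allI impI conjI)
  note run = assms(14) and del = assms(11)
  let ?P = "pen_real f g m h q nu eps"
  fix i assume i: "i < CARD('n)"
  obtain B where B: "\<forall>z \<in> Sless g m \<inter> cbox l u. B \<le> ?P z"
    using pen_real_bounded_below[OF compact_cbox] continuous_on_if_C1_fun assms(1,2,7) by metis
  have "summable (\<lambda>k. \<Sum>j<CARD('n). (al k j)\<^sup>2)"
    using B dfl_run_feasible[OF run] dfl_run_outer_descent[OF run del] assms(8)
    by (intro summable_of_descent[where P = "\<lambda>k. ?P (x k)" and B = B]) (auto intro: sum_nonneg)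
  then have "summable (\<lambda>k. (al k i)\<^sup>2)"
    by (rule summable_comparison_test'[where N = 0]) (use i in \<open>auto intro: member_le_sum\<close>)
  then show al: "(\<lambda>k. al k i) \<longlonglongrightarrow> 0" by (rule LIMSEQ_zero_if_summable_power2)
  have "\<bar>alt (Suc k) i\<bar> \<le> \<bar>al k i\<bar> + theta * \<bar>alt k i\<bar>" for k
    using dfl_run_step_update[OF run i, of k] assms(9) by (auto simp: abs_mult)
  then show "(\<lambda>k. alt k i) \<longlonglongrightarrow> 0"
    using assms(9,10) by (intro LIMSEQ_zero_perturbed_contraction[OF al, of theta]) auto
qed

end
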